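(* Let $\bm{\theta}$ be a target model with softmax outputs $f_{\bm{\theta}}(\bm{x})$, let $p(\boldsymbol{\phi})$ be a (prior/shadow) distribution over model parameters, let $\pi$ be the data population distribution over feature–label pairs, with the target samples belonging to the population, and let $\lambda\in(0,1)$. Define the BASE score \[ \Lambda_{\textsc{BASE}}(\bm{x}_i,y_i;\bm{\theta}) = \sigma\left(-\ell(f_{\bm{\theta}}(\bm{x}_i),y_i) - \log\int e^{-\ell(f_{\boldsymbol{\phi}}(\bm{x}_i),y_i)}p(\boldsymbol{\phi})\,\mathrm{d}\boldsymbol{\phi} + \log\frac{\lambda}{1-\lambda}\right) \] and the RMIA score with parameter $\gamma$ \[ \Lambda_{\textsc{RMIA}}(\bm{x}_i,y_i;\bm{\theta}) = \Pr_{(\bm{x}_j,y_j)\sim\pi}\left[\frac{p(\bm{\theta}\mid\bm{x}_i,y_i)}{p(\bm{\theta}\mid\bm{x}_j,y_j)} \geq \gamma\right], \] where the likelihood ratio is evaluated as $\frac{p(\bm{\theta}\mid\bm{x}_i,y_i)}{p(\bm{\theta}\mid\bm{x}_j,y_j)}=\frac{p(y_i\mid\bm{x}_i,\bm{\theta})/p(y_i\mid\bm{x}_i)}{p(y_j\mid\bm{x}_j,\bm{\theta})/p(y_j\mid\bm{x}_j)}$ with $p(y\mid\bm{x},\bm{\theta})=f_{\bm{\theta}}(\bm{x})_y$ and $p(y\mid\bm{x})=\mathbb{E}_{\boldsymbol{\phi}\sim p(\boldsymbol{\phi})}[f_{\boldsymbol{\phi}}(\bm{x})_y]$. Then the BASE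 attack is equivalent to the RMIA attack with $\gamma=1$; more precisely, the RMIA scores with $\gamma=1$ are related to the BASE scores via a monotone increasing function.
   Context: $\ell(f_{\bm{\theta}}(\bm{x}),y)=-\log f_{\bm{\theta}}(\bm{x})_y$ is the negative log-likelihood loss, and $\sigma$ is the sigmoid function. A score-based membership inference attack predicts "member" for target samples whose score exceeds a decision threshold; two score-based attacks are equivalent if for any decision threshold for one attack there exists a decision threshold for the other attack yielding identical hard predictions (in particular they have identical ROC curves). *)

theory Defs
  imports "HOL-Probability.Probability"
begin

definition sigmoid :: "real \<Rightarrow> real" where
  "sigmoid t = 1 / (1 + exp (- t))"

definition nll :: "('y \<Rightarrow> real) \<Rightarrow> 'y \<Rightarrow> real" where
  "nll p y = - ln (p y)"

text \<open>Models: f phi x is the softmax output vector (over labels) of the model with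
  parameters phi at input x.  The prior/shadow distribution over parameters is the
  measure P.\<close>

definition base_score ::
  "'p measure \<Rightarrow> ('p \<Rightarrow> 'x \<Rightarrow> 'y \<Rightarrow> real) \<Rightarrow> real \<Rightarrow> 'p \<Rightarrow> 'x \<Rightarrow> 'y \<Rightarrow> real" where
  "base_score P f lam \<theta> x y =
     sigmoid (- nll (f \<theta> x) y - ln (\<integral>\<phi>. exp (- nll (f \<phi> x) y) \<partial>P) + ln (lam / (1 - lam)))"

definition marg_lik :: "'p measure \<Rightarrow> ('p \<Rightarrow> 'x \<Rightarrow> 'y \<Rightarrow> real) \<Rightarrow> 'x \<Rightarrow> 'y \<Rightarrow> real" where
  "marg_lik P f x y = (\<integral>\<phi>. f \<phi> x y \<partial>P)"

definition lik_ratio ::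
  "'p measure \<Rightarrow> ('p \<Rightarrow> 'x \<Rightarrow> 'y \<Rightarrow> real) \<Rightarrow> 'p \<Rightarrow> 'x \<times> 'y \<Rightarrow> 'x \<times> 'y \<Rightarrow> real" where
  "lik_ratio P f \<theta> zi zj =
     (f \<theta> (fst zi) (snd zi) / marg_lik P f (fst zi) (snd zi)) /
     (f \<theta> (fst zj) (snd zj) / marg_lik P f (fst zj) (snd zj))"

definition rmia_score ::
  "'p measure \<Rightarrow> ('x \<times> 'y) measure \<Rightarrow> ('p \<Rightarrow> 'x \<Rightarrow> 'y \<Rightarrow> real) \<Rightarrow> real \<Rightarrow> 'p \<Rightarrow> 'x \<Rightarrow> 'y \<Rightarrow> real" where
  "rmia_score P Pop f \<gamma> \<theta> x y =
     measure Pop {zj \<in> space Pop. lik_ratio P f \<theta> (x, y) zj \<ge> \<gamma>}"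

end

theory Submission
  imports Defs
begin

(* With positive softmax outputs, exp (- nll) is the likelihood itself, so the BASE score is
   sigmoid (ln r + ln (lam / (1 - lam))) of the relative likelihood r = p(y | x, theta) / p(y | x).
   The RMIA likelihood ratio is r(x_i, y_i) / r(x_j, y_j), so with gamma = 1 the RMIA score is
   the population probability of r(x_j, y_j) <= r(x_i, y_i).  As the BASE score is strictly
   increasing in r, this is the distribution function of the BASE score over the population,
   evaluated at the BASE score of the target sample. *)

definition relative_lik :: "'p measure \<Rightarrow> ('p \<Rightarrow> 'x \<Rightarrow> 'y \<Rightarrow> real) \<Rightarrow> 'p \<Rightarrow> 'x \<times> 'y \<Rightarrow> real"
  where "relative_lik P f \<theta> z = f \<theta> (fst z) (snd z) / marg_lik P f (fst z) (snd z)"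

lemma lik_ratio_eq_divide:
  "lik_ratio P f \<theta> zi zj = relative_lik P f \<theta> zi / relative_lik P f \<theta> zj"
  unfolding lik_ratio_def relative_lik_def ..

lemma sigmoid_strict_mono: "strict_mono sigmoid"
proof (rule strict_monoI)
  fix a b :: real
  assume "a < b"
  then have "1 + exp (- b) < 1 + exp (- a)" by simp
  then show "sigmoid a < sigmoid b"
    unfolding sigmoid_def by (simp add: add_pos_pos frac_less2)
qed

lemma sigmoid_ln_add_le_iff:
  assumes "a > 0" "b > 0"
  shows "sigmoid (ln a + c) \<le> sigmoid (ln b + c) \<longleftrightarrow> a \<le> b"
  using assms by (simp add: strict_mono_less_eq[OF sigmoid_strict_mono])

lemma le_one_if_nonneg_sum_eq_one:
  fixes p :: "'y::finite \<Rightarrow> real"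
  assumes "\<And>y. 0 \<le> p y" and "(\<Sum>y\<in>UNIV. p y) = 1"
  shows "p y \<le> 1"
  using member_le_sum[of y UNIV p] assms by simp

lemma (in prob_space) integral_pos:
  fixes f :: "'a \<Rightarrow> real"
  assumes "integrable M f" and "\<And>x. f x > 0"
  shows "(\<integral>x. f x \<partial>M) > 0"
proof -
  have nonneg: "AE x in M. 0 \<le> f x"
    using assms(2) by (simp add: less_imp_le)
  have "(\<integral>x. f x \<partial>M) \<noteq> 0"
  proof
    assume "(\<integral>x. f x \<partial>M) = 0"
    then have "AE x in M. f x = 0"
      using integral_nonneg_eq_0_iff_AE[OF assms(1) nonneg] by simp
    then have "AE x in M. False"
      using assms(2) by (auto elim!: eventually_mono simp: less_le)
    then show False by simp
  qed
  with integral_nonneg_AE[OF nonneg] show ?thesis by simp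
qed

lemma marg_lik_pos:
  fixes f :: "'p \<Rightarrow> 'x \<Rightarrow> 'y::finite \<Rightarrow> real"
  assumes "prob_space P"
    and pos: "\<And>\<phi> x y. f \<phi> x y > 0"
    and sum_one: "\<And>\<phi> x. (\<Sum>y\<in>UNIV. f \<phi> x y) = 1"
    and "(\<lambda>\<phi>. f \<phi> x y) \<in> borel_measurable P"
  shows "marg_lik P f x y > 0"
proof -
  interpret prob_space P by fact
  have "f \<phi> x y \<le> 1" for \<phi>
    using pos sum_one by (intro le_one_if_nonneg_sum_eq_one[of "f \<phi> x"]) (auto intro: less_imp_le)
  then have "integrable P (\<lambda>\<phi>. f \<phi> x y)"
    using assms(4) pos by (intro integrable_const_bound[where B = 1]) (auto simp: abs_of_pos)
  then show ?thesis
    unfolding marg_lik_def using pos by (rule integral_pos)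
qed

lemma base_score_eq_sigmoid_ln_relative_lik:
  assumes "\<And>\<phi>. f \<phi> x y > 0" and "marg_lik P f x y > 0"
  shows "base_score P f lam \<theta> x y =
    sigmoid (ln (relative_lik P f \<theta> (x, y)) + ln (lam / (1 - lam)))"
proof -
  have "exp (- nll (f \<phi> x) y) = f \<phi> x y" for \<phi>
    unfolding nll_def using assms(1) by simp
  moreover have "ln (relative_lik P f \<theta> (x, y)) = ln (f \<theta> x y) - ln (marg_lik P f x y)"
    unfolding relative_lik_def using assms(1)[of \<theta>] assms(2) by (simp add: ln_div)
  ultimately show ?thesis
    unfolding base_score_def nll_def marg_lik_def by simp
qed

lemma rmia_score_one_eq_measure_le:
  assumes "\<And>z. relative_lik P f \<theta> z > 0"
  shows "rmia_score P Pop f 1 \<theta> x y =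
    measure Pop {z \<in> space Pop. relative_lik P f \<theta> z \<le> relative_lik P f \<theta> (x, y)}"
  unfolding rmia_score_def lik_ratio_eq_divide using assms by (simp add: le_divide_eq)

lemma (in finite_measure) mono_measure_le_level:
  fixes s :: "'a \<Rightarrow> real"
  assumes [measurable]: "s \<in> borel_measurable M"
  shows "mono (\<lambda>t. measure M {z \<in> space M. s z \<le> t})"
proof -
  have "{z \<in> space M. s z \<le> t} \<in> sets M" for t
    by measurable
  then show ?thesis by (intro monoI finite_measure_mono) auto
qed

theorem theorem2:
  fixes P :: "'p measure" and Pop :: "('x \<times> 'y::finite) measure"
    and f :: "'p \<Rightarrow> 'x \<Rightarrow> 'y \<Rightarrow> real" and \<theta> :: 'p and lam :: real
  assumes P_prob: "prob_space P"
    and Pi_prob: "prob_space Pop"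
    and softmax_pos: "\<And>\<phi> x y. f \<phi> x y > 0"
    and softmax_sum: "\<And>\<phi> x. (\<Sum>y\<in>UNIV. f \<phi> x y) = 1"
    and f_meas: "\<And>x y. (\<lambda>\<phi>. f \<phi> x y) \<in> borel_measurable P"
    and ratio_meas: "(\<lambda>z. f \<theta> (fst z) (snd z) / marg_lik P f (fst z) (snd z)) \<in> borel_measurable Pop"
    and lam: "0 < lam" "lam < 1"
  shows "\<exists>g :: real \<Rightarrow> real. mono g \<and>
           (\<forall>x y. (x, y) \<in> space Pop \<longrightarrow>
              rmia_score P Pop f 1 \<theta> x y = g (base_score P f lam \<theta> x y))"
proof -
  interpret Pop: prob_space Pop by (rule Pi_prob)
  let ?r = "relative_lik P f \<theta>" and ?c = "ln (lam / (1 - lam))"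
  let ?base = "\<lambda>z. base_score P f lam \<theta> (fst z) (snd z)"
  have marg_pos: "marg_lik P f x y > 0" for x y
    using P_prob softmax_pos softmax_sum f_meas by (rule marg_lik_pos)
  have r_pos: "?r z > 0" for z
    unfolding relative_lik_def using marg_pos softmax_pos by simp
  have base_eq: "?base z = sigmoid (ln (?r z) + ?c)" for z
    using base_score_eq_sigmoid_ln_relative_lik[OF softmax_pos marg_pos] by simp
  have "?base \<in> borel_measurable Pop"
    unfolding base_eq sigmoid_def using ratio_meas[folded relative_lik_def] by measurable
  then have "mono (\<lambda>t. measure Pop {z \<in> space Pop. ?base z \<le> t})"
    by (rule Pop.mono_measure_le_level)
  moreover have "rmia_score P Pop f 1 \<theta> x y =
      measure Pop {z \<in> space Pop. ?base z \<le> base_score P f lam \<theta> x y}" for x y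
    using base_eq[of "(x, y)"]
    by (simp add: rmia_score_one_eq_measure_le r_pos base_eq sigmoid_ln_add_le_iff)
  ultimately show ?thesis by blast
qed

end
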